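(* Let $\lambda>0$, $n\ge2$ an integer, and $X_1,\ldots,X_n$ i.i.d. $\mathrm{ZTP}(\lambda)$. Let $\widehat G=\frac{1}{n-1}\cdot\frac{\sum_{1\le i<j\le n}|X_i-X_j|}{\sum_{i=1}^n X_i}$. Then $$\mathbb{E}(\widehat G)=\frac{n\lambda e^{-n\lambda}}{[1-e^{-\lambda}]^n}\int_0^1\big[I_0(2\lambda y)+I_1(2\lambda y)\big]\,[e^{\lambda y}-1]^{n-2}\,dy-\frac{n e^{-\lambda}}{(n-1)[1-e^{-\lambda}]}.$$ Consequently, with $G$ the Gini coefficient of $\mathrm{ZTP}(\lambda)$, $$\mathbb{E}(\widehat G)-G=\frac{n\lambda e^{-n\lambda}}{[1-e^{-\lambda}]^n}\int_0^1\big[I_0(2\lambda y)+I_1(2\lambda y)\big][e^{\lambda y}-1]^{n-2}dy-\frac{n e^{-\lambda}}{(n-1)[1-e^{-\lambda}]}+\frac{2e^{-\lambda}}{1-e^{-\lambda}}\int_0^\lambda I_0(2\sqrt{\lambda t})e^{-t}dt-\frac{e^{-2\lambda}}{1-e^{-\lambda}}I_1(2\lambda)-1.$$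
   Context: $X\sim\mathrm{ZTP}(\lambda)$ means $\mathbb{P}(X=k)=\frac{1}{1-e^{-\lambda}}\frac{e^{-\lambda}\lambda^k}{k!}$ for $k=1,2,\ldots$. The Gini coefficient of a random variable $X$ with finite mean is $G=\frac12\,\mathbb{E}|X_1-X_2|/\mathbb{E}(X)$ with $X_1,X_2$ independent copies of $X$. $I_\nu$ denotes the modified Bessel function of the first kind of order $\nu$. *)

theory Defs
  imports "HOL-Analysis.Analysis" "HOL-Probability.Probability"
begin

definition ztp_pmf :: "real \<Rightarrow> nat pmf" where
  "ztp_pmf l = cond_pmf (poisson_pmf l) {1..}"

definition bessel_I :: "nat \<Rightarrow> real \<Rightarrow> real" where
  "bessel_I nu x = (\<Sum>k. (x / 2) ^ (2 * k + nu) / (fact k * fact (k + nu)))"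

definition gini :: "nat pmf \<Rightarrow> real" where
  "gini p = (1/2) * measure_pmf.expectation (pair_pmf p p) (\<lambda>(a, b). \<bar>real a - real b\<bar>)
             / measure_pmf.expectation p real"

definition gini_hat :: "nat \<Rightarrow> (nat \<Rightarrow> nat) \<Rightarrow> real" where
  "gini_hat n X = 1 / (real n - 1) *
     ((\<Sum>j<n. \<Sum>i<j. \<bar>real (X i) - real (X j)\<bar>) / (\<Sum>i<n. real (X i)))"

end

theory Submission
  imports Defs
begin

(* Write 1 / S = \<integral>\<^sub>0\<^sup>1 y^(S - 1) dy for the sample total S. By Tonelli and independence,
  the expectation of the estimator becomes an integral over y of
  E[|X1 - X2| y^(X1 + X2)] (E y^X)^(n - 2), weighted by n / (2 y).  The generating function
  E y^X = (e^(l y) - 1) / (e^l - 1) is elementary.  Summing |a - b| z^(a + b) / (a! b!) along the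
  antidiagonals a + b = m and using sum_a |m - 2a| (m choose a) = 2 m (m - 1 choose (m - 1) div 2)
  produces the series 2 z (I_0(2z) + I_1(2z)); the terms with a = 0 or b = 0, excluded by the
  truncation, contribute 2 z e^z.  The population Gini coefficient comes from the same double series
  at y = 1 together with the mean l e^l / (e^l - 1), and \<integral>\<^sub>0\<^sup>l I_0(2 sqrt(l t)) e^(-t) dt is evaluated
  termwise through incomplete gamma integrals. *)

section \<open>The zero-truncated Poisson distribution\<close>

lemma pmf_ztp:
  assumes l: "l > 0"
  shows "pmf (ztp_pmf l) k = (if k = 0 then 0 else l ^ k / fact k / (exp l - 1))"
proof -
  have "pmf (poisson_pmf l) 1 > 0" using l by (simp add: pmf_poisson)
  then have ne: "set_pmf (poisson_pmf l) \<inter> {1..} \<noteq> {}"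
    by (auto simp: set_pmf_eq' intro!: exI[of _ 1])
  have "{1::nat..} = UNIV - {0}" by auto
  then have m: "measure_pmf.prob (poisson_pmf l) {1..} = 1 - exp (- l)"
    using l measure_pmf.prob_compl[where M="poisson_pmf l" and A="{0}"]
    by (simp add: measure_pmf_single pmf_poisson)
  have e: "exp (- l) * l ^ k / fact k / (1 - exp (- l)) = l ^ k / fact k / (exp l - 1)"
    using l by (simp add: exp_minus field_simps)
  show ?thesis
    unfolding ztp_pmf_def pmf_cond[OF ne] m using l e by (auto simp: pmf_poisson mult.commute)
qed

lemma nn_integral_pmf_nat:
  "(\<integral>\<^sup>+k. f k \<partial>measure_pmf p) = (\<Sum>k. ennreal (pmf p (k::nat)) * f k)"
  by (simp add: nn_integral_measure_pmf nn_integral_count_space_nat)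

lemma set_Pi_pmf_ztp_ge_1:
  fixes n k :: nat
  assumes l: "l > 0" and x: "x \<in> set_pmf (Pi_pmf {..<n} 0 (\<lambda>_. ztp_pmf l))" and k: "k < n"
  shows "x k \<ge> 1"
proof -
  have "x k \<in> set_pmf (ztp_pmf l)"
    using x k set_Pi_pmf[OF finite_lessThan[of n], of 0 "\<lambda>_. ztp_pmf l"] by (auto simp: PiE_dflt_def)
  then have "pmf (ztp_pmf l) (x k) \<noteq> 0" by (simp add: set_pmf_eq)
  then show ?thesis by (cases "x k") (auto simp: pmf_ztp[OF l])
qed

section \<open>Series for the modified Bessel functions\<close>

lemma sums_bessel_I: "(\<lambda>k. (x / 2) ^ (2 * k + nu) / (fact k * fact (k + nu))) sums bessel_I nu x"
proof -
  define y where "y = \<bar>x / 2\<bar>"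
  have majorant: "summable (\<lambda>k. y ^ nu * (inverse (fact k) * (y ^ 2) ^ k))"
    by (intro summable_mult summable_exp)
  have bound: "norm ((x / 2) ^ (2 * k + nu) / (fact k * fact (k + nu)))
      \<le> y ^ nu * (inverse (fact k) * (y ^ 2) ^ k)" for k
  proof -
    have "norm ((x / 2) ^ (2 * k + nu) / (fact k * fact (k + nu)))
        = y ^ (2 * k + nu) / (fact k * fact (k + nu))"
      by (simp add: y_def abs_mult power_abs)
    also have "\<dots> \<le> y ^ (2 * k + nu) / fact k"
    proof (rule divide_left_mono)
      show "fact k \<le> fact k * (fact (k + nu) :: real)" by simp
    qed (auto simp: y_def)
    also have "\<dots> = y ^ nu * (inverse (fact k) * (y ^ 2) ^ k)"
      by (simp add: power_add divide_inverse mult_ac flip: power_mult)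
    finally show ?thesis .
  qed
  have "summable (\<lambda>k. (x / 2) ^ (2 * k + nu) / (fact k * fact (k + nu)))"
    by (rule summable_comparison_test[OF _ majorant]) (use bound in blast)
  then show ?thesis unfolding bessel_I_def by (rule summable_sums)
qed

lemma sums_bessel_I0: "(\<lambda>k. z ^ (2 * k) / (fact k) ^ 2) sums bessel_I 0 (2 * z)"
  using sums_bessel_I[of "2 * z" 0] by (simp add: power2_eq_square)

lemma sums_bessel_I1: "(\<lambda>k. z ^ (2 * k + 1) / (fact k * fact (Suc k))) sums bessel_I 1 (2 * z)"
  using sums_bessel_I[of "2 * z" 1] by simp

lemma bessel_I0_nonneg: "bessel_I 0 (2 * z) \<ge> 0"
  using sums_le[of "\<lambda>_. 0" _ 0, OF _ sums_zero sums_bessel_I0[of z]] by auto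

lemma bessel_I_measurable [measurable]: "bessel_I nu \<in> borel_measurable borel"
  unfolding bessel_I_def by measurable

section \<open>The double series of |a - b| z^(a + b) / (a! b!)\<close>

lemma suminf_ennreal_swap:
  fixes F :: "nat \<Rightarrow> nat \<Rightarrow> ennreal"
  shows "(\<Sum>a. \<Sum>b. F a b) = (\<Sum>b. \<Sum>a. F a b)"
proof -
  have "(\<Sum>a. \<Sum>b. F a b) = (\<integral>\<^sup>+a. (\<Sum>b. F a b) \<partial>count_space UNIV)"
    by (simp add: nn_integral_count_space_nat)
  also have "\<dots> = (\<Sum>b. \<integral>\<^sup>+a. F a b \<partial>count_space UNIV)"
    by (rule nn_integral_suminf) simp
  also have "\<dots> = (\<Sum>b. \<Sum>a. F a b)"
    by (simp add: nn_integral_count_space_nat)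
  finally show ?thesis .
qed

lemma suminf_ennreal_antidiagonal:
  fixes F :: "nat \<Rightarrow> nat \<Rightarrow> ennreal"
  shows "(\<Sum>a. \<Sum>b. F a b) = (\<Sum>m. \<Sum>a\<le>m. F a (m - a))"
proof -
  have shift: "(\<Sum>m. if a \<le> m then F a (m - a) else 0) = (\<Sum>b. F a b)" for a
    using suminf_offset[of "\<lambda>m. if a \<le> m then F a (m - a) else 0" a] by (simp add: summableI)
  have "(\<Sum>a. \<Sum>b. F a b) = (\<Sum>a. \<Sum>m. if a \<le> m then F a (m - a) else 0)"
    by (simp add: shift)
  also have "\<dots> = (\<Sum>m. \<Sum>a. if a \<le> m then F a (m - a) else 0)"
    by (rule suminf_ennreal_swap)
  also have "\<dots> = (\<Sum>m. \<Sum>a\<le>m. F a (m - a))"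
    by (intro suminf_cong, subst suminf_finite[where N="{..m}" for m]) auto
  finally show ?thesis .
qed

lemma sums_of_suminf_ennreal:
  assumes f: "\<And>i. 0 \<le> f i" and x: "x \<ge> 0" and e: "(\<Sum>i. ennreal (f i)) = ennreal x"
  shows "f sums x"
proof -
  have s: "summable f" using summable_suminf_not_top[OF f] e by simp
  have "ennreal (suminf f) = ennreal x" using suminf_ennreal2[OF f s] e by simp
  then have "suminf f = x" using x suminf_nonneg[OF s f] by (simp add: ennreal_inj)
  then show ?thesis using summable_sums[OF s] by simp
qed

lemma sum_centred_binomial_atMost:
  assumes "m \<ge> 1"
  shows "(\<Sum>a\<le>j. (real m - 2 * real a) * real (m choose a)) = real m * real ((m - 1) choose j)"
proof (induction j)
  case 0 then show ?case by simp
next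
  case (Suc j)
  obtain m' where m: "m = Suc m'" using assms by (cases m) auto
  have pascal: "real (m choose Suc j) = real (m' choose j) + real (m' choose Suc j)"
    unfolding m by simp
  have absorb: "real (Suc j) * real (m choose Suc j) = real m * real (m' choose j)"
    using Suc_times_binomial_eq[of m' j] unfolding m by (metis mult.commute of_nat_mult)
  have "(\<Sum>a\<le>Suc j. (real m - 2 * real a) * real (m choose a))
      = real m * real (m' choose j) + (real m - 2 * real (Suc j)) * real (m choose Suc j)"
    using Suc by (simp add: m)
  also have "\<dots> = real m * real (m' choose Suc j)"
    using pascal absorb by (simp add: algebra_simps)
  finally show ?case by (simp add: m)
qed

lemma sum_abs_centred_binomial:
  assumes m: "m \<ge> 1"
  shows "(\<Sum>a\<le>m. \<bar>real m - 2 * real a\<bar> * real (m choose a))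
       = 2 * real m * real ((m - 1) choose ((m - 1) div 2))"
proof -
  define h where "h = (m - 1) div 2"
  define t where "t a = (real m - 2 * real a) * real (m choose a)" for a
  \<comment> \<open>The signed terms sum to zero, so the absolute sum is twice the sum of the positive terms,
    which are exactly those with a \<le> h.\<close>
  have total: "(\<Sum>a\<le>m. t a) = 0"
    using sum_centred_binomial_atMost[OF m, of m] m by (simp add: t_def)
  have split: "{..m} = {..h} \<union> {h<..m}" unfolding h_def by auto
  have "(\<Sum>a\<le>m. max (t a) 0) = (\<Sum>a\<le>h. max (t a) 0) + (\<Sum>a\<in>{h<..m}. max (t a) 0)"
    unfolding split by (rule sum.union_disjoint) auto
  also have "(\<Sum>a\<in>{h<..m}. max (t a) 0) = 0"
    by (rule sum.neutral) (auto simp: t_def h_def mult_nonpos_nonneg)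
  also have "(\<Sum>a\<le>h. max (t a) 0) = (\<Sum>a\<le>h. t a)"
    by (rule sum.cong) (auto simp: t_def h_def)
  also have "\<dots> = real m * real ((m - 1) choose h)"
    unfolding t_def by (rule sum_centred_binomial_atMost[OF m])
  finally have pos: "(\<Sum>a\<le>m. max (t a) 0) = real m * real ((m - 1) choose h)" by simp
  have "(\<Sum>a\<le>m. \<bar>real m - 2 * real a\<bar> * real (m choose a)) = (\<Sum>a\<le>m. 2 * max (t a) 0 - t a)"
  proof (rule sum.cong)
    have "\<bar>x\<bar> * c = 2 * max (x * c) 0 - x * c" if "c \<ge> 0" for x c :: real
      using that by (cases "x \<ge> 0") (auto simp: max_def mult_le_0_iff)
    then show "\<bar>real m - 2 * real a\<bar> * real (m choose a) = 2 * max (t a) 0 - t a" for a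
      by (simp add: t_def)
  qed simp
  also have "\<dots> = 2 * real m * real ((m - 1) choose h)"
    using pos total by (simp add: sum_subtractf sum_distrib_left[symmetric])
  finally show ?thesis unfolding h_def .
qed


definition abs_diff_antidiag :: "real \<Rightarrow> nat \<Rightarrow> real" where
  "abs_diff_antidiag z m = (\<Sum>a\<le>m. \<bar>real a - real (m - a)\<bar> * z ^ m / (fact a * fact (m - a)))"

lemma abs_diff_antidiag_closed_form:
  "abs_diff_antidiag z m =
     (if m = 0 then 0 else 2 * real m * real ((m - 1) choose ((m - 1) div 2)) * z ^ m / fact m)"
proof (cases "m = 0")
  case True then show ?thesis by (simp add: abs_diff_antidiag_def)
next
  case False
  have "abs_diff_antidiag z m = (\<Sum>a\<le>m. \<bar>real m - 2 * real a\<bar> * real (m choose a) * z ^ m / fact m)"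
    unfolding abs_diff_antidiag_def
  proof (rule sum.cong)
    fix a assume a: "a \<in> {..m}"
    have "real (fact a * fact (m - a) * (m choose a)) = real (fact m)"
      using a by (subst binomial_fact_lemma) simp_all
    then have fact_m: "fact m = fact a * fact (m - a) * real (m choose a)"
      by (simp only: of_nat_mult of_nat_fact)
    have "real (m choose a) > 0" using a by simp
    moreover have "\<bar>real a - real (m - a)\<bar> = \<bar>real m - 2 * real a\<bar>"
      using a by (auto simp: of_nat_diff)
    ultimately show "\<bar>real a - real (m - a)\<bar> * z ^ m / (fact a * fact (m - a)) =
        \<bar>real m - 2 * real a\<bar> * real (m choose a) * z ^ m / fact m"
      unfolding fact_m by simp
  qed simp
  also have "\<dots> = (\<Sum>a\<le>m. \<bar>real m - 2 * real a\<bar> * real (m choose a)) * z ^ m / fact m"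
    by (simp add: sum_distrib_right sum_divide_distrib)
  also have "\<dots> = 2 * real m * real ((m - 1) choose ((m - 1) div 2)) * z ^ m / fact m"
    using False by (subst sum_abs_centred_binomial) auto
  finally show ?thesis using False by simp
qed

lemma abs_diff_antidiag_odd:
  "abs_diff_antidiag z (2 * k + 1) = 2 * z * (z ^ (2 * k) / (fact k) ^ 2)"
proof -
  have C: "real ((2 * k) choose k) = fact (2 * k) / (fact k * fact k)"
    by (simp add: binomial_fact)
  have F: "(fact (2 * k + 1) :: real) = real (2 * k + 1) * fact (2 * k)"
    by (metis Suc_eq_plus1 fact_Suc)
  have cancel: "2 * N * (A / (B * B)) * z ^ (j + 1) / (N * A) = 2 * z * (z ^ j / B ^ 2)"
    if "A > 0" "B > 0" "N > 0" for A B N :: real and j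
    using that by (simp add: field_simps power2_eq_square)
  have "abs_diff_antidiag z (2 * k + 1)
      = 2 * real (2 * k + 1) * real ((2 * k) choose k) * z ^ (2 * k + 1) / fact (2 * k + 1)"
    by (simp add: abs_diff_antidiag_closed_form)
  also have "\<dots> = 2 * z * (z ^ (2 * k) / (fact k) ^ 2)"
    unfolding C F by (rule cancel) auto
  finally show ?thesis .
qed

lemma abs_diff_antidiag_even:
  "abs_diff_antidiag z (2 * k + 2) = 2 * z * (z ^ (2 * k + 1) / (fact k * fact (Suc k)))"
proof -
  have C: "real ((2 * k + 1) choose k) = fact (2 * k + 1) / (fact k * fact (Suc k))"
    by (simp add: binomial_fact)
  have F: "(fact (2 * k + 2) :: real) = real (2 * k + 2) * fact (2 * k + 1)"
    using fact_Suc[of "2 * k + 1", where 'a=real] by simp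
  have cancel: "2 * N * (A / B) * z ^ (j + 1) / (N * A) = 2 * z * (z ^ j / B)"
    if "A > 0" "B > 0" "N > 0" for A B N :: real and j
    using that by (simp add: field_simps)
  have "abs_diff_antidiag z (2 * k + 2)
      = 2 * real (2 * k + 2) * real ((2 * k + 1) choose k) * z ^ (2 * k + 1 + 1) / fact (2 * k + 2)"
    by (simp add: abs_diff_antidiag_closed_form)
  also have "\<dots> = 2 * z * (z ^ (2 * k + 1) / (fact k * fact (Suc k)))"
    unfolding C F by (rule cancel) auto
  finally show ?thesis .
qed

lemma abs_diff_antidiag_nonneg: "z \<ge> 0 \<Longrightarrow> abs_diff_antidiag z m \<ge> 0"
  unfolding abs_diff_antidiag_def by (intro sum_nonneg) simp

lemma sums_abs_diff_antidiag:
  "abs_diff_antidiag z sums (2 * z * (bessel_I 0 (2 * z) + bessel_I 1 (2 * z)))"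
proof -
  define f where "f k = abs_diff_antidiag z (2 * k)" for k
  define g where "g k = abs_diff_antidiag z (2 * k + 1)" for k
  have "(\<lambda>k. f (Suc k)) = (\<lambda>k. 2 * z * (z ^ (2 * k + 1) / (fact k * fact (Suc k))))"
    using abs_diff_antidiag_even by (simp add: f_def fun_eq_iff)
  then have "(\<lambda>k. f (Suc k)) sums (2 * z * bessel_I 1 (2 * z))"
    using sums_mult[OF sums_bessel_I1, of "2 * z" z] by simp
  then have f: "f sums (2 * z * bessel_I 1 (2 * z))"
    by (subst (asm) sums_Suc_iff) (simp add: f_def abs_diff_antidiag_def)
  have g: "g sums (2 * z * bessel_I 0 (2 * z))"
    unfolding g_def abs_diff_antidiag_odd by (rule sums_mult[OF sums_bessel_I0])
  have "(\<lambda>n. if even n then f (n div 2) else g ((n - 1) div 2)) = abs_diff_antidiag z"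
  proof
    fix n :: nat
    show "(if even n then f (n div 2) else g ((n - 1) div 2)) = abs_diff_antidiag z n"
    proof (cases "even n")
      case False
      then have "2 * ((n - 1) div 2) + 1 = n" by presburger
      with False show ?thesis by (simp add: g_def)
    qed (simp add: f_def)
  qed
  then show ?thesis
    using sums_if[OF g f] by (simp add: algebra_simps)
qed

lemma suminf_abs_diff_exp_series:
  assumes z: "z \<ge> 0"
  shows "(\<Sum>a. \<Sum>b. ennreal (\<bar>real a - real b\<bar> * z ^ (a + b) / (fact a * fact b)))
       = ennreal (2 * z * (bessel_I 0 (2 * z) + bessel_I 1 (2 * z)))"
proof -
  have "(\<Sum>a. \<Sum>b. ennreal (\<bar>real a - real b\<bar> * z ^ (a + b) / (fact a * fact b)))
      = (\<Sum>m. \<Sum>a\<le>m. ennreal (\<bar>real a - real (m - a)\<bar> * z ^ m / (fact a * fact (m - a))))"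
    by (subst suminf_ennreal_antidiagonal) (intro suminf_cong sum.cong; simp)
  also have "\<dots> = (\<Sum>m. ennreal (abs_diff_antidiag z m))"
    unfolding abs_diff_antidiag_def using z by (intro suminf_cong sum_ennreal) auto
  also have "\<dots> = ennreal (2 * z * (bessel_I 0 (2 * z) + bessel_I 1 (2 * z)))"
    using z by (intro suminf_ennreal_eq sums_abs_diff_antidiag abs_diff_antidiag_nonneg)
  finally show ?thesis .
qed

lemma sums_real_mult_power_fact: "(\<lambda>b. real b * z ^ b / fact b) sums (z * exp z)"
proof -
  have "(\<lambda>b. z * (z ^ b / fact b)) sums (z * exp z)"
    using sums_mult[OF exp_converges[of z], of z] by (simp add: divide_inverse mult_ac)
  moreover have "real (Suc b) * z ^ Suc b / fact (Suc b) = z * (z ^ b / fact b)" for b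
    by (simp add: divide_simps)
  ultimately show ?thesis
    using sums_Suc_iff[of "\<lambda>b. real b * z ^ b / fact b" "z * exp z"] by simp
qed

lemma sums_exp_minus_one: "(\<lambda>k. if k = 0 then 0 else (x::real) ^ k / fact k) sums (exp x - 1)"
proof -
  have "(\<lambda>k. x ^ k / fact k) sums (exp x - 1 + x ^ 0 / fact 0)"
    using exp_converges[of x] by (simp add: divide_inverse mult_ac real_scaleR_def)
  then have "(\<lambda>k. x ^ Suc k / fact (Suc k)) sums (exp x - 1)"
    by (subst sums_Suc_iff)
  then show ?thesis
    using sums_Suc_iff[of "\<lambda>k. if k = 0 then 0 else x ^ k / fact k" "exp x - 1"] by simp
qed

definition abs_diff_series_pos :: "real \<Rightarrow> real" where
  "abs_diff_series_pos z = 2 * z * (bessel_I 0 (2 * z) + bessel_I 1 (2 * z)) - 2 * z * exp z"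

lemma suminf_abs_diff_exp_series_pos:
  assumes z: "z \<ge> 0"
  shows "(\<Sum>a. \<Sum>b. ennreal (if a = 0 \<or> b = 0 then 0
            else \<bar>real a - real b\<bar> * z ^ (a + b) / (fact a * fact b)))
       = ennreal (abs_diff_series_pos z)" (is "?T = _")
    and "abs_diff_series_pos z \<ge> 0"
proof -
  define f where "f a b = \<bar>real a - real b\<bar> * z ^ (a + b) / (fact a * fact b)" for a b :: nat
  define g where "g b = real b * z ^ b / fact b" for b :: nat
  define B where "B = 2 * z * (bessel_I 0 (2 * z) + bessel_I 1 (2 * z))"
  \<comment> \<open>The terms with a = 0 or b = 0 form two copies of the series of g.\<close>
  have split: "ennreal (f a b) = ennreal (if a = 0 \<or> b = 0 then 0 else f a b)
        + ((if a = 0 then ennreal (g b) else 0) + (if b = 0 then ennreal (g a) else 0))" for a b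
    by (auto simp: f_def g_def)
  have g: "(\<Sum>b. ennreal (g b)) = ennreal (z * exp z)"
    unfolding g_def using z by (intro suminf_ennreal_eq sums_real_mult_power_fact) auto
  have edge1: "(\<Sum>a. \<Sum>b. if a = 0 then ennreal (g b) else 0) = ennreal (z * exp z)"
    using g by (subst suminf_finite[of "{0}"]) auto
  have edge2: "(\<Sum>a. \<Sum>b. if b = 0 then ennreal (g a) else 0) = ennreal (z * exp z)"
    using g by (subst suminf_finite[of "{0}"]) auto
  have "ennreal B = (\<Sum>a. \<Sum>b. ennreal (f a b))"
    using suminf_abs_diff_exp_series[OF z] by (simp add: f_def B_def)
  also have "\<dots> = ?T + ((\<Sum>a. \<Sum>b. if a = 0 then ennreal (g b) else 0)
                         + (\<Sum>a. \<Sum>b. if b = 0 then ennreal (g a) else 0))"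
    unfolding split by (simp only: f_def suminf_add[symmetric] summableI)
  also have "\<dots> = ?T + ennreal (2 * z * exp z)"
    unfolding edge1 edge2 using z by (simp flip: ennreal_plus)
  finally have eq: "ennreal B = ?T + ennreal (2 * z * exp z)" .
  have "B \<ge> 0"
    unfolding B_def using z abs_diff_antidiag_nonneg
    by (intro sums_le[OF _ sums_zero sums_abs_diff_antidiag]) auto
  moreover have "ennreal (2 * z * exp z) \<le> ennreal B"
    unfolding eq by simp
  ultimately show nonneg: "abs_diff_series_pos z \<ge> 0"
    unfolding abs_diff_series_pos_def B_def by (simp add: ennreal_le_iff)
  have "?T = ennreal B - ennreal (2 * z * exp z)"
    unfolding eq by (simp add: ennreal_add_diff_cancel_right)
  also have "\<dots> = ennreal (abs_diff_series_pos z)"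
    unfolding abs_diff_series_pos_def B_def using z by (simp add: ennreal_minus)
  finally show "?T = ennreal (abs_diff_series_pos z)" .
qed

section \<open>Moments of the zero-truncated Poisson distribution\<close>

lemma nn_integral_ztp_power:
  assumes l: "l > 0" and y: "y \<ge> 0"
  shows "(\<integral>\<^sup>+k. ennreal (y ^ k) \<partial>ztp_pmf l) = ennreal ((exp (l * y) - 1) / (exp l - 1))"
proof -
  have el: "exp l - 1 > 0" using l by simp
  have "(\<integral>\<^sup>+k. ennreal (y ^ k) \<partial>ztp_pmf l)
      = (\<Sum>k. ennreal ((if k = 0 then 0 else (l * y) ^ k / fact k) / (exp l - 1)))"
    unfolding nn_integral_pmf_nat using y el
    by (intro suminf_cong) (simp add: pmf_ztp[OF l] power_mult_distrib flip: ennreal_mult)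
  also have "\<dots> = ennreal ((exp (l * y) - 1) / (exp l - 1))"
    using l y el by (intro suminf_ennreal_eq sums_divide sums_exp_minus_one) auto
  finally show ?thesis .
qed

lemma nn_integral_ztp_real:
  assumes l: "l > 0"
  shows "(\<integral>\<^sup>+k. ennreal (real k) \<partial>ztp_pmf l) = ennreal (l * exp l / (exp l - 1))"
proof -
  have el: "exp l - 1 > 0" using l by simp
  have "(\<integral>\<^sup>+k. ennreal (real k) \<partial>ztp_pmf l) = (\<Sum>k. ennreal ((real k * l ^ k / fact k) / (exp l - 1)))"
    unfolding nn_integral_pmf_nat using el
    by (intro suminf_cong) (simp add: pmf_ztp[OF l] mult_ac flip: ennreal_mult)
  also have "\<dots> = ennreal (l * exp l / (exp l - 1))"
    using l el by (intro suminf_ennreal_eq sums_divide sums_real_mult_power_fact) auto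
  finally show ?thesis .
qed

lemma nn_integral_ztp_abs_diff_power:
  assumes l: "l > 0" and y: "y \<ge> 0"
  shows "(\<integral>\<^sup>+a. \<integral>\<^sup>+b. ennreal \<bar>real a - real b\<bar> * ennreal (y ^ a) * ennreal (y ^ b) \<partial>ztp_pmf l \<partial>ztp_pmf l)
       = ennreal (abs_diff_series_pos (l * y) / (exp l - 1) ^ 2)"
proof -
  have el: "exp l - 1 > 0" using l by simp
  define K where "K = 1 / (exp l - 1) ^ 2"
  define F where "F a b = (if a = 0 \<or> b = 0 then 0
    else \<bar>real a - real b\<bar> * (l * y) ^ (a + b) / (fact a * fact b))" for a b :: nat
  have K: "K \<ge> 0" unfolding K_def by simp
  have F: "F a b \<ge> 0" for a b unfolding F_def using l y by simp
  have summand: "ennreal (pmf (ztp_pmf l) a) * (ennreal (pmf (ztp_pmf l) b)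
        * (ennreal \<bar>real a - real b\<bar> * ennreal (y ^ a) * ennreal (y ^ b))) = ennreal K * ennreal (F a b)"
    for a b
  proof -
    have "pmf (ztp_pmf l) a * (pmf (ztp_pmf l) b * (\<bar>real a - real b\<bar> * y ^ a * y ^ b)) = K * F a b"
      using el unfolding pmf_ztp[OF l] K_def F_def
      by (auto simp: power_add power_mult_distrib field_simps power2_eq_square)
    then show ?thesis
      using y K F by (simp flip: ennreal_mult)
  qed
  have "(\<integral>\<^sup>+a. \<integral>\<^sup>+b. ennreal \<bar>real a - real b\<bar> * ennreal (y ^ a) * ennreal (y ^ b) \<partial>ztp_pmf l \<partial>ztp_pmf l)
      = (\<Sum>a. \<Sum>b. ennreal K * ennreal (F a b))"
    unfolding nn_integral_pmf_nat ennreal_suminf_cmult[symmetric] summand ..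
  also have "\<dots> = ennreal K * (\<Sum>a. \<Sum>b. ennreal (F a b))"
    by (simp add: ennreal_suminf_cmult)
  also have "(\<Sum>a. \<Sum>b. ennreal (F a b)) = ennreal (abs_diff_series_pos (l * y))"
    unfolding F_def using l y by (intro suminf_abs_diff_exp_series_pos) simp
  also have "ennreal K * \<dots> = ennreal (abs_diff_series_pos (l * y) / (exp l - 1) ^ 2)"
    using suminf_abs_diff_exp_series_pos(2)[of "l * y"] l y K
    by (simp add: K_def flip: ennreal_mult)
  finally show ?thesis .
qed

lemma nn_integral_Pi_pmf_pair_prod:
  fixes q :: "nat pmf" and y :: real and I :: "'i set"
  assumes I: "finite I" "i \<in> I" "j \<in> I" "i \<noteq> j"
  shows "(\<integral>\<^sup>+x. ennreal \<bar>real (x i) - real (x j)\<bar> * (\<Prod>k\<in>I. ennreal (y ^ x k)) \<partial>Pi_pmf I 0 (\<lambda>_. q))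
    = (\<integral>\<^sup>+a. \<integral>\<^sup>+b. ennreal \<bar>real a - real b\<bar> * ennreal (y ^ a) * ennreal (y ^ b) \<partial>q \<partial>q)
      * (\<integral>\<^sup>+k. ennreal (y ^ k) \<partial>q) ^ (card I - 2)"
proof -
  define R where "R = I - {i, j}"
  have R: "finite R" "i \<notin> insert j R" "j \<notin> R" "I = insert i (insert j R)"
    using I by (auto simp: R_def)
  have card_R: "card R = card I - 2" using I by (simp add: R_def card_Diff_subset)
  define H where "H x = ennreal \<bar>real (x i) - real (x j)\<bar> * (\<Prod>k\<in>I. ennreal (y ^ x k))"
    for x :: "'i \<Rightarrow> nat"
  define G where "G = (\<integral>\<^sup>+k. ennreal (y ^ k) \<partial>q)"
  have H_upd: "H ((h(j := b))(i := a)) = (ennreal \<bar>real a - real b\<bar> * ennreal (y ^ a) * ennreal (y ^ b))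
        * (\<Prod>k\<in>R. ennreal (y ^ h k))" for a b h
  proof -
    have "(\<Prod>k\<in>R. ennreal (y ^ ((h(j := b))(i := a)) k)) = (\<Prod>k\<in>R. ennreal (y ^ h k))"
      using R by (intro prod.cong) auto
    then show ?thesis
      unfolding H_def R(4) using R I by (simp add: prod.insert ac_simps)
  qed
  have inner: "(\<integral>\<^sup>+h. H ((h(j := b))(i := a)) \<partial>Pi_pmf R 0 (\<lambda>_. q))
        = (ennreal \<bar>real a - real b\<bar> * ennreal (y ^ a) * ennreal (y ^ b)) * G ^ (card I - 2)" for a b
    unfolding H_upd G_def card_R[symmetric]
    using nn_integral_prod_Pi_pmf[OF R(1), of 0 "\<lambda>_. q" "\<lambda>_ k. ennreal (y ^ k)"]
    by (simp add: nn_integral_cmult)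
  have "(\<integral>\<^sup>+x. H x \<partial>Pi_pmf I 0 (\<lambda>_. q))
      = (\<integral>\<^sup>+a. \<integral>\<^sup>+b. \<integral>\<^sup>+h. H ((h(j := b))(i := a)) \<partial>Pi_pmf R 0 (\<lambda>_. q) \<partial>q \<partial>q)"
    unfolding R(4) using R
    by (simp add: Pi_pmf_insert[of "insert j R"] Pi_pmf_insert[of R] nn_integral_pair_pmf' case_prod_unfold)
  also have "\<dots> = (\<integral>\<^sup>+a. \<integral>\<^sup>+b. ennreal \<bar>real a - real b\<bar> * ennreal (y ^ a) * ennreal (y ^ b) \<partial>q \<partial>q)
      * G ^ (card I - 2)"
    unfolding inner by (simp add: nn_integral_multc)
  finally show ?thesis unfolding H_def G_def .
qed

lemma gini_ztp:
  assumes l: "l > 0"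
  shows "gini (ztp_pmf l)
       = (bessel_I 0 (2 * l) + bessel_I 1 (2 * l) - exp l) / (exp l * (exp l - 1))"
proof -
  have el: "exp l - 1 > 0" using l by simp
  have "(\<integral>\<^sup>+p. ennreal (case p of (a, b) \<Rightarrow> \<bar>real a - real b\<bar>) \<partial>pair_pmf (ztp_pmf l) (ztp_pmf l))
      = ennreal (abs_diff_series_pos l / (exp l - 1) ^ 2)"
    using nn_integral_ztp_abs_diff_power[OF l, of 1] by (simp add: nn_integral_pair_pmf')
  then have mean_abs_diff: "measure_pmf.expectation (pair_pmf (ztp_pmf l) (ztp_pmf l))
      (\<lambda>(a, b). \<bar>real a - real b\<bar>) = abs_diff_series_pos l / (exp l - 1) ^ 2"
    using suminf_abs_diff_exp_series_pos(2)[of l] l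
    by (subst integral_eq_nn_integral) (auto simp: case_prod_unfold)
  have mean: "measure_pmf.expectation (ztp_pmf l) real = l * exp l / (exp l - 1)"
    using nn_integral_ztp_real[OF l] l el by (subst integral_eq_nn_integral) auto
  have "1 / 2 * ((2 * l * B - 2 * l * x) / d ^ 2) / (l * x / d) = (B - x) / (x * d)"
    if "d > 0" "x > 0" for B d x :: real
    using that l by (simp add: field_simps power2_eq_square)
  then show ?thesis
    unfolding gini_def mean_abs_diff mean abs_diff_series_pos_def using el by simp
qed

section \<open>The expected sample Gini coefficient as an integral over [0, 1]\<close>

lemma nn_integral_power_unit_interval:
  assumes S: "S \<ge> (1::nat)"
  shows "(\<integral>\<^sup>+y. ennreal (y ^ (S - 1)) * indicator {0..1} y \<partial>lborel) = ennreal (1 / real S)"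
proof -
  have "((\<lambda>y. y ^ S / real S) has_real_derivative y ^ (S - 1)) (at y)" for y :: real
    using DERIV_cdivide[OF DERIV_pow[of S y], of "real S"] S by simp
  then have "(\<integral>\<^sup>+y. ennreal (y ^ (S - 1)) * indicator {0..1} y \<partial>lborel)
      = ennreal (1 ^ S / real S - 0 ^ S / real S)"
    by (intro nn_integral_FTC_Icc) auto
  then show ?thesis using S by (simp add: power_0_left)
qed

lemma gini_hat_nonneg: "n \<ge> 2 \<Longrightarrow> gini_hat n x \<ge> 0"
  unfolding gini_hat_def by (intro mult_nonneg_nonneg divide_nonneg_nonneg sum_nonneg) auto

lemma gini_hat_le:
  assumes n: "n \<ge> 2"
  shows "gini_hat n x \<le> real n * real n"
proof -
  define S where "S = (\<Sum>i<n. real (x i))"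
  define D where "D = (\<Sum>j<n. \<Sum>i<j. \<bar>real (x i) - real (x j)\<bar>)"
  have S0: "S \<ge> 0" unfolding S_def by (simp add: sum_nonneg)
  have D0: "D \<ge> 0" unfolding D_def by (simp add: sum_nonneg)
  have le_S: "real (x i) \<le> S" if "i < n" for i
    unfolding S_def using that by (intro member_le_sum) auto
  have "D \<le> (\<Sum>j<n. \<Sum>i<n. S)"
    unfolding D_def
  proof (rule sum_mono)
    fix j assume j: "j \<in> {..<n}"
    have "(\<Sum>i<j. \<bar>real (x i) - real (x j)\<bar>) \<le> (\<Sum>i<j. S)"
    proof (rule sum_mono)
      fix i assume "i \<in> {..<j}"
      then show "\<bar>real (x i) - real (x j)\<bar> \<le> S" using j le_S[of i] le_S[of j] by auto
    qed
    also have "\<dots> \<le> (\<Sum>i<n. S)" using j S0 by (intro sum_mono2) auto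
    finally show "(\<Sum>i<j. \<bar>real (x i) - real (x j)\<bar>) \<le> (\<Sum>i<n. S)" .
  qed
  then have "D / S \<le> real n * real n"
    using S0 by (cases "S = 0") (simp_all add: pos_divide_le_eq)
  moreover have "1 / (real n - 1) * (D / S) \<le> D / S"
    using n S0 D0 by (intro mult_left_le_one_le) auto
  ultimately show ?thesis unfolding gini_hat_def S_def D_def by linarith
qed

definition gini_hat_kernel :: "real \<Rightarrow> nat \<Rightarrow> real \<Rightarrow> real" where
  "gini_hat_kernel l n y = real n / 2
     * (abs_diff_series_pos (l * y) / (exp l - 1) ^ 2 * ((exp (l * y) - 1) / (exp l - 1)) ^ (n - 2)) / y"

lemma gini_hat_kernel_nonneg: "l > 0 \<Longrightarrow> y \<ge> 0 \<Longrightarrow> gini_hat_kernel l n y \<ge> 0"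
  unfolding gini_hat_kernel_def using suminf_abs_diff_exp_series_pos(2)[of "l * y"] by simp

lemma gini_hat_kernel_measurable [measurable]: "gini_hat_kernel l n \<in> borel_measurable borel"
  unfolding gini_hat_kernel_def abs_diff_series_pos_def by measurable

lemma nn_integral_gini_hat_weight:
  fixes n :: nat
  assumes l: "l > 0" and n: "n \<ge> 2" and y: "y > 0"
  shows "(\<integral>\<^sup>+x. ennreal ((\<Sum>j<n. \<Sum>i<j. \<bar>real (x i) - real (x j)\<bar>) / (real n - 1))
              * ennreal (y ^ ((\<Sum>i<n. x i) - 1)) \<partial>Pi_pmf {..<n} 0 (\<lambda>_. ztp_pmf l))
       = ennreal (gini_hat_kernel l n y)"
proof -
  let ?P = "Pi_pmf {..<n} 0 (\<lambda>_. ztp_pmf l)"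
  define c where "c = 1 / ((real n - 1) * y)"
  define p where "p = abs_diff_series_pos (l * y) / (exp l - 1) ^ 2
                      * ((exp (l * y) - 1) / (exp l - 1)) ^ (n - 2)"
  have c: "c \<ge> 0" unfolding c_def using n y by simp
  have p: "p \<ge> 0"
    unfolding p_def using suminf_abs_diff_exp_series_pos(2)[of "l * y"] l y by simp
  have integrand: "ennreal ((\<Sum>j<n. \<Sum>i<j. \<bar>real (x i) - real (x j)\<bar>) / (real n - 1))
        * ennreal (y ^ ((\<Sum>i<n. x i) - 1))
      = ennreal c * (\<Sum>j<n. \<Sum>i<j. ennreal \<bar>real (x i) - real (x j)\<bar> * (\<Prod>k<n. ennreal (y ^ x k)))"
    if x: "x \<in> set_pmf ?P" for x
  proof -
    define S where "S = (\<Sum>i<n. x i)"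
    define D where "D = (\<Sum>j<n. \<Sum>i<j. \<bar>real (x i) - real (x j)\<bar>)"
    have "1 \<le> x 0" using set_Pi_pmf_ztp_ge_1[OF l x, of 0] n by simp
    also have "x 0 \<le> S" unfolding S_def using n by (intro member_le_sum) auto
    finally have "y ^ (S - 1) = y ^ S / y"
      using y by (simp add: power_diff)
    also have "y ^ S = (\<Prod>k<n. y ^ x k)" unfolding S_def by (rule power_sum)
    finally have "D / (real n - 1) * y ^ (S - 1) = c * (D * (\<Prod>k<n. y ^ x k))"
      unfolding c_def using n y by simp
    also have "\<dots> = c * (\<Sum>j<n. \<Sum>i<j. \<bar>real (x i) - real (x j)\<bar> * (\<Prod>k<n. y ^ x k))"
      unfolding D_def by (simp only: sum_distrib_right)
    finally have real_eq: "D / (real n - 1) * y ^ (S - 1)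
        = c * (\<Sum>j<n. \<Sum>i<j. \<bar>real (x i) - real (x j)\<bar> * (\<Prod>k<n. y ^ x k))" .
    have "D / (real n - 1) \<ge> 0" unfolding D_def using n by (simp add: sum_nonneg)
    then have "ennreal (D / (real n - 1)) * ennreal (y ^ (S - 1))
        = ennreal (c * (\<Sum>j<n. \<Sum>i<j. \<bar>real (x i) - real (x j)\<bar> * (\<Prod>k<n. y ^ x k)))"
      unfolding real_eq[symmetric] using y by (intro ennreal_mult[symmetric]) auto
    also have "\<dots> = ennreal c
        * (\<Sum>j<n. \<Sum>i<j. ennreal \<bar>real (x i) - real (x j)\<bar> * (\<Prod>k<n. ennreal (y ^ x k)))"
      using c y by (simp add: ennreal_mult sum_nonneg prod_nonneg sum_ennreal[symmetric] prod_ennreal)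
    finally show ?thesis unfolding D_def S_def .
  qed
  have pair: "(\<integral>\<^sup>+x. ennreal \<bar>real (x i) - real (x j)\<bar> * (\<Prod>k<n. ennreal (y ^ x k)) \<partial>?P) = ennreal p"
    if "i < j" "j < n" for i j
  proof -
    have "(exp (l * y) - 1) / (exp l - 1) \<ge> 0" using l y by simp
    moreover have "abs_diff_series_pos (l * y) / (exp l - 1) ^ 2 \<ge> 0"
      using suminf_abs_diff_exp_series_pos(2)[of "l * y"] l y by simp
    ultimately have "ennreal p = ennreal (abs_diff_series_pos (l * y) / (exp l - 1) ^ 2)
        * ennreal ((exp (l * y) - 1) / (exp l - 1)) ^ (n - 2)"
      unfolding p_def by (subst ennreal_mult) (auto simp: ennreal_power)
    then show ?thesis
      using nn_integral_Pi_pmf_pair_prod[of "{..<n}" i j "ztp_pmf l" y] that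
      unfolding nn_integral_ztp_abs_diff_power[OF l less_imp_le[OF y]]
        nn_integral_ztp_power[OF l less_imp_le[OF y]] by simp
  qed
  have "(\<integral>\<^sup>+x. ennreal ((\<Sum>j<n. \<Sum>i<j. \<bar>real (x i) - real (x j)\<bar>) / (real n - 1))
              * ennreal (y ^ ((\<Sum>i<n. x i) - 1)) \<partial>?P)
      = (\<integral>\<^sup>+x. ennreal c * (\<Sum>j<n. \<Sum>i<j. ennreal \<bar>real (x i) - real (x j)\<bar>
              * (\<Prod>k<n. ennreal (y ^ x k))) \<partial>?P)"
    by (intro nn_integral_cong_AE) (use AE_measure_pmf[of ?P] integrand in \<open>auto elim!: AE_mp\<close>)
  also have "\<dots> = ennreal c * (\<Sum>j<n. \<Sum>i<j. ennreal p)"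
    by (simp add: nn_integral_cmult nn_integral_sum pair)
  also have "\<dots> = ennreal (c * (p * (\<Sum>j<n. real j)))"
    using c p
    by (simp add: sum_ennreal ennreal_of_nat_eq_real_of_nat sum_distrib_left sum_nonneg mult_ac
             flip: ennreal_mult)
  also have "c * (p * (\<Sum>j<n. real j)) = gini_hat_kernel l n y"
  proof -
    have gauss: "(\<Sum>j<n. real j) = real n * (real n - 1) / 2"
      by (induction n) (auto simp: field_simps)
    have "1 / ((real n - 1) * y) * (p * (real n * (real n - 1) / 2)) = real n / 2 * p / y"
      using n y by (simp add: field_simps)
    then show ?thesis
      unfolding c_def gini_hat_kernel_def p_def[symmetric] gauss .
  qed
  finally show ?thesis .
qed

lemma nn_integral_gini_hat:
  fixes n :: nat
  assumes l: "l > 0" and n: "n \<ge> 2"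
  shows "(\<integral>\<^sup>+x. ennreal (gini_hat n x) \<partial>Pi_pmf {..<n} 0 (\<lambda>_. ztp_pmf l))
       = (\<integral>\<^sup>+y. ennreal (gini_hat_kernel l n y) * indicator {0..1} y \<partial>lborel)"
proof -
  let ?P = "Pi_pmf {..<n} 0 (\<lambda>_. ztp_pmf l)"
  define D where "D x = (\<Sum>j<n. \<Sum>i<j. \<bar>real (x i) - real (x j)\<bar>) / (real n - 1)"
    for x :: "nat \<Rightarrow> nat"
  define S where "S x = (\<Sum>i<n. x i)" for x :: "nat \<Rightarrow> nat"
  define H where "H x y = ennreal (D x) * (ennreal (y ^ (S x - 1)) * indicator {0..1} y)"
    for x :: "nat \<Rightarrow> nat" and y :: real
  have gini_hat_eq: "ennreal (gini_hat n x) = (\<integral>\<^sup>+y. H x y \<partial>lborel)" if x: "x \<in> set_pmf ?P" for x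
  proof -
    have "1 \<le> x 0" using set_Pi_pmf_ztp_ge_1[OF l x, of 0] n by simp
    also have "x 0 \<le> S x" unfolding S_def using n by (intro member_le_sum) auto
    finally have S: "S x \<ge> 1" .
    have D: "D x \<ge> 0" unfolding D_def using n by (intro divide_nonneg_nonneg sum_nonneg) auto
    have "gini_hat n x = D x * (1 / real (S x))"
      unfolding gini_hat_def D_def S_def by (simp add: of_nat_sum)
    then have "ennreal (gini_hat n x) = ennreal (D x) * ennreal (1 / real (S x))"
      using D by (simp only: ennreal_mult of_nat_0_le_iff divide_nonneg_nonneg zero_le_one)
    also have "\<dots> = (\<integral>\<^sup>+y. H x y \<partial>lborel)"
      unfolding H_def nn_integral_power_unit_interval[OF S, symmetric]
      by (rule nn_integral_cmult[symmetric]) measurable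
    finally show ?thesis .
  qed
  interpret pair_sigma_finite "measure_pmf ?P" lborel
    by (intro pair_sigma_finite.intro prob_space_imp_sigma_finite measure_pmf.prob_space_axioms
        lborel.sigma_finite_measure_axioms)
  \<comment> \<open>The exponent S x - 1 is natural-valued, hence measurable through the countable image.\<close>
  have "(\<lambda>p. ennreal (D (fst p))) \<in> borel_measurable (measure_pmf ?P \<Otimes>\<^sub>M lborel)"
    by (rule measurable_compose[OF measurable_fst]) simp
  moreover have "(\<lambda>p. ennreal (snd p ^ (S (fst p) - 1))) \<in> borel_measurable (measure_pmf ?P \<Otimes>\<^sub>M lborel)"
  proof (rule measurable_compose_countable[where f="\<lambda>k p. ennreal (snd p ^ k)"])
    show "(\<lambda>p. S (fst p) - 1) \<in> measurable (measure_pmf ?P \<Otimes>\<^sub>M lborel) (count_space UNIV)"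
      by (rule measurable_compose[OF measurable_fst]) simp
  qed measurable
  ultimately have H_measurable: "case_prod H \<in> borel_measurable (measure_pmf ?P \<Otimes>\<^sub>M lborel)"
    unfolding H_def case_prod_beta' by measurable
  have "(\<integral>\<^sup>+x. ennreal (gini_hat n x) \<partial>?P) = (\<integral>\<^sup>+x. \<integral>\<^sup>+y. H x y \<partial>lborel \<partial>?P)"
    by (intro nn_integral_cong_AE) (use AE_measure_pmf[of ?P] gini_hat_eq in \<open>auto elim!: AE_mp\<close>)
  also have "\<dots> = (\<integral>\<^sup>+y. \<integral>\<^sup>+x. H x y \<partial>?P \<partial>lborel)"
    by (rule Fubini'[OF H_measurable, symmetric])
  also have "\<dots> = (\<integral>\<^sup>+y. ennreal (gini_hat_kernel l n y) * indicator {0..1} y \<partial>lborel)"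
  proof (rule nn_integral_cong_AE)
    show "AE y in lborel. (\<integral>\<^sup>+x. H x y \<partial>?P) = ennreal (gini_hat_kernel l n y) * indicator {0..1} y"
      using AE_lborel_singleton[of 0]
    proof (rule AE_mp, intro AE_I2 impI)
      fix y :: real assume "y \<noteq> 0"
      then show "(\<integral>\<^sup>+x. H x y \<partial>?P) = ennreal (gini_hat_kernel l n y) * indicator {0..1} y"
        using nn_integral_gini_hat_weight[OF l n, of y]
        by (cases "y \<in> {0..1}") (simp_all add: H_def D_def S_def)
    qed
  qed
  finally show ?thesis .
qed

lemma has_integral_gini_hat_kernel:
  fixes n :: nat
  assumes l: "l > 0" and n: "n \<ge> 2"
  shows "(gini_hat_kernel l n has_integral
           measure_pmf.expectation (Pi_pmf {..<n} 0 (\<lambda>_. ztp_pmf l)) (gini_hat n)) {0..1}"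
proof -
  let ?P = "Pi_pmf {..<n} 0 (\<lambda>_. ztp_pmf l)"
  let ?X = "\<integral>\<^sup>+x. ennreal (gini_hat n x) \<partial>?P"
  have "?X \<le> (\<integral>\<^sup>+x. ennreal (real n * real n) \<partial>?P)"
    by (intro nn_integral_mono) (simp add: gini_hat_le[OF n])
  also have "\<dots> < top" by (simp add: measure_pmf.emeasure_space_1)
  finally obtain r where r: "?X = ennreal r" "r \<ge> 0" by (cases ?X rule: ennreal_cases) auto
  have "measure_pmf.expectation ?P (gini_hat n) = enn2real ?X"
    by (rule integral_eq_nn_integral) (auto simp: gini_hat_nonneg[OF n])
  then have expectation: "measure_pmf.expectation ?P (gini_hat n) = r" using r by simp
  have "((\<lambda>y. indicator {0..1} y * gini_hat_kernel l n y) has_integral r) UNIV"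
  proof (rule nn_integral_has_integral)
    have "(\<integral>\<^sup>+y. ennreal (indicator {0..1} y * gini_hat_kernel l n y) \<partial>lborel)
        = (\<integral>\<^sup>+y. ennreal (gini_hat_kernel l n y) * indicator {0..1} y \<partial>lborel)"
      by (intro nn_integral_cong) (auto simp: indicator_def)
    then show "(\<integral>\<^sup>+y. ennreal (indicator {0..1} y * gini_hat_kernel l n y) \<partial>lborel) = ennreal r"
      using nn_integral_gini_hat[OF l n] r by simp
  qed (use r gini_hat_kernel_nonneg[OF l] in \<open>auto simp: indicator_def\<close>)
  moreover have "(\<lambda>y. indicator {0..1} y * gini_hat_kernel l n y)
      = (\<lambda>y. if y \<in> {0..1} then gini_hat_kernel l n y else 0)"
    by (auto simp: indicator_def)
  ultimately have "((\<lambda>y. if y \<in> {0..1} then gini_hat_kernel l n y else 0) has_integral r) UNIV"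
    by (simp only:)
  then show ?thesis
    unfolding expectation by (simp only: has_integral_restrict_UNIV)
qed

lemma has_integral_exp_mult_power:
  fixes l :: real and n :: nat
  assumes l: "l > 0" and n: "n \<ge> 2"
  shows "((\<lambda>y. exp (l * y) * (exp (l * y) - 1) ^ (n - 2)) has_integral
           (exp l - 1) ^ (n - 1) / ((real n - 1) * l)) {0..1}"
proof -
  define F where "F y = (exp (l * y) - 1) ^ (n - 1) / ((real n - 1) * l)" for y
  have deriv: "(F has_real_derivative exp (l * y) * (exp (l * y) - 1) ^ (n - 2)) (at y)" for y
  proof -
    have "((\<lambda>y. exp (l * y) - 1) has_real_derivative exp (l * y) * l) (at y)"
      by (auto intro!: derivative_eq_intros)
    from DERIV_cdivide[OF DERIV_power[OF this, of "n - 1"], of "(real n - 1) * l"]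
    have "(F has_real_derivative real (n - 1) * (exp (l * y) * l * (exp (l * y) - 1) ^ (n - 1 - Suc 0))
        / ((real n - 1) * l)) (at y)"
      unfolding F_def .
    moreover have "real (n - 1) * (exp (l * y) * l * (exp (l * y) - 1) ^ (n - 1 - Suc 0))
        / ((real n - 1) * l) = exp (l * y) * (exp (l * y) - 1) ^ (n - 2)"
    proof -
      have "n - 1 - Suc 0 = n - 2" "real (n - 1) = real n - 1" "real n - 1 > 0"
        using n by auto
      then show ?thesis using l by (simp add: field_simps)
    qed
    ultimately show ?thesis by simp
  qed
  have "((\<lambda>y. exp (l * y) * (exp (l * y) - 1) ^ (n - 2)) has_integral (F 1 - F 0)) {0..1}"
    by (intro fundamental_theorem_of_calculus)
       (auto intro!: DERIV_subset[OF deriv] simp: has_real_derivative_iff_has_vector_derivative[symmetric])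
  then show ?thesis unfolding F_def using n by (simp add: power_0_left)
qed

lemma expectation_gini_hat_ztp:
  fixes l :: real and n :: nat
  assumes l: "l > 0" and n: "n \<ge> 2"
  shows "measure_pmf.expectation (Pi_pmf {..<n} 0 (\<lambda>_. ztp_pmf l)) (gini_hat n)
       = n * l / (exp l - 1) ^ n * integral {0..1} (\<lambda>y. (bessel_I 0 (2 * l * y) + bessel_I 1 (2 * l * y))
                                    * (exp (l * y) - 1) ^ (n - 2))
         - n / ((real n - 1) * (exp l - 1))"
proof -
  define EG where "EG = measure_pmf.expectation (Pi_pmf {..<n} 0 (\<lambda>_. ztp_pmf l)) (gini_hat n)"
  define d where "d = exp l - 1"
  define A where "A = real n * l / d ^ n"
  define B where "B y = (bessel_I 0 (2 * l * y) + bessel_I 1 (2 * l * y)) * (exp (l * y) - 1) ^ (n - 2)"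
    for y
  define E where "E y = exp (l * y) * (exp (l * y) - 1) ^ (n - 2)" for y
  have d: "d > 0" unfolding d_def using l by simp
  have A: "A > 0" unfolding A_def using l n d by simp
  have "2 + (n - 2) = n" using n by simp
  then have dn: "d ^ n = d ^ 2 * d ^ (n - 2)" by (metis power_add)
  have split: "N / 2 * ((2 * (l * y) * b - 2 * (l * y) * e) / D * (u / D')) / y
      = N * l / (D * D') * (b * u) - N * l / (D * D') * (e * u)"
    if "y > 0" "D > 0" "D' > 0" for N y b e u D D' :: real
    using that by (simp add: field_simps)
  \<comment> \<open>The factor 1 / y of the kernel cancels the factor l y of the series.\<close>
  have kernel: "B y = (gini_hat_kernel l n y + A * E y) / A" if "y \<in> {0..1} - {0}" for y
  proof -
    have "gini_hat_kernel l n y = A * B y - A * E y"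
      unfolding gini_hat_kernel_def abs_diff_series_pos_def d_def[symmetric] power_divide
        A_def B_def E_def dn
      using that d by (subst split) (auto simp: mult.assoc)
    then show ?thesis using A by simp
  qed
  have "((\<lambda>y. (gini_hat_kernel l n y + A * E y) / A) has_integral
           (EG + A * (d ^ (n - 1) / ((real n - 1) * l))) / A) {0..1}"
    unfolding EG_def d_def E_def
    by (intro has_integral_divide has_integral_add has_integral_mult_right
              has_integral_gini_hat_kernel has_integral_exp_mult_power l n)
  from has_integral_spike[OF negligible_sing[of 0] _ this]
  have "(B has_integral (EG + A * (d ^ (n - 1) / ((real n - 1) * l))) / A) {0..1}"
    using kernel by auto
  then have J: "integral {0..1} B = (EG + A * (d ^ (n - 1) / ((real n - 1) * l))) / A"
    by (rule integral_unique)
  have "A * (d ^ (n - 1) / ((real n - 1) * l)) = n / ((real n - 1) * d)"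
  proof -
    have "d ^ n = d * d ^ (n - 1)" using n by (simp flip: power_Suc)
    moreover have "real n - 1 > 0" using n by simp
    ultimately show ?thesis using l d by (simp add: A_def field_simps)
  qed
  then show ?thesis
    using A J unfolding EG_def[symmetric] B_def[symmetric] A_def[symmetric] d_def[symmetric]
    by (simp add: field_simps)
qed

section \<open>The integral of I_0(2 sqrt(l t)) e^(-t) over [0, l]\<close>

definition exp_taylor :: "nat \<Rightarrow> real \<Rightarrow> real" where
  "exp_taylor k t = (\<Sum>j\<le>k. t ^ j / fact j)"

lemma exp_taylor_0 [simp]: "exp_taylor k 0 = 1"
  unfolding exp_taylor_def by (induction k) auto

lemma exp_taylor_nonneg: "t \<ge> 0 \<Longrightarrow> exp_taylor k t \<ge> 0"
  unfolding exp_taylor_def by (intro sum_nonneg) auto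

lemma exp_taylor_le_exp:
  assumes "t \<ge> 0"
  shows "exp_taylor k t \<le> exp t"
proof -
  have s: "(\<lambda>j. t ^ j / fact j) sums exp t"
    using exp_converges[of t] by (simp add: real_scaleR_def divide_inverse mult_ac)
  have "exp_taylor k t = (\<Sum>j<Suc k. t ^ j / fact j)"
    unfolding exp_taylor_def by (simp add: lessThan_Suc_atMost)
  also have "\<dots> \<le> exp t"
    using sum_le_suminf[OF sums_summable[OF s], of "{..<Suc k}"] assms sums_unique[OF s] by auto
  finally show ?thesis .
qed

lemma has_real_derivative_exp_taylor:
  "(exp_taylor k has_real_derivative (exp_taylor k t - t ^ k / fact k)) (at t)"
proof (induction k)
  case 0
  have "exp_taylor 0 = (\<lambda>_. 1)" by (auto simp: exp_taylor_def)
  then show ?case by simp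
next
  case (Suc k)
  have split: "exp_taylor (Suc k) = (\<lambda>t. exp_taylor k t + t ^ Suc k / fact (Suc k))"
    by (auto simp: exp_taylor_def)
  have "((\<lambda>t. t ^ Suc k / fact (Suc k)) has_real_derivative (t ^ k / fact k)) (at t)"
    using DERIV_cdivide[OF DERIV_pow[of "Suc k" t], of "fact (Suc k)"]
    by (simp add: divide_simps del: of_nat_Suc)
  from DERIV_add[OF Suc this] show ?case
    unfolding split by simp
qed

lemma nn_integral_power_exp_Icc:
  assumes l: "l \<ge> 0"
  shows "(\<integral>\<^sup>+t. ennreal (t ^ k * exp (- t)) * indicator {0..l} t \<partial>lborel)
       = ennreal (fact k * (1 - exp (- l) * exp_taylor k l))"
proof -
  have "((\<lambda>t. - fact k * exp (- t) * exp_taylor k t) has_real_derivative (t ^ k * exp (- t))) (at t)"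
    for t
  proof -
    have "((\<lambda>t. - fact k * exp (- t) * exp_taylor k t) has_real_derivative
        - fact k * (exp (- t) * (- 1)) * exp_taylor k t
        + (- fact k * exp (- t)) * (exp_taylor k t - t ^ k / fact k)) (at t)"
    proof -
      have "((\<lambda>t. - fact k * exp (- t)) has_real_derivative (- fact k * (exp (- t) * (- 1)))) (at t)"
        by (intro DERIV_cmult DERIV_chain2[OF DERIV_exp] derivative_eq_intros) auto
      from DERIV_mult[OF this has_real_derivative_exp_taylor[of k t]] show ?thesis
        by (simp add: mult.commute)
    qed
    then show ?thesis by (simp add: algebra_simps)
  qed
  then have "(\<integral>\<^sup>+t. ennreal (t ^ k * exp (- t)) * indicator {0..l} t \<partial>lborel)
      = ennreal (- fact k * exp (- l) * exp_taylor k l - (- fact k * exp (- 0) * exp_taylor k 0))"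
    using l by (intro nn_integral_FTC_Icc) auto
  then show ?thesis by (simp add: algebra_simps)
qed

lemma sums_power_fact_exp_taylor:
  assumes l: "l \<ge> 0"
  shows "(\<lambda>k. l ^ k / fact k * exp_taylor k l) sums ((exp l * exp l + bessel_I 0 (2 * l)) / 2)"
proof -
  define a where "a k = l ^ k / fact k" for k :: nat
  have a: "a k \<ge> 0" for k unfolding a_def using l by simp
  have sum_a: "(\<Sum>k. ennreal (a k)) = ennreal (exp l)"
    using a exp_converges[of l]
    by (intro suminf_ennreal_eq) (simp_all add: a_def real_scaleR_def divide_inverse mult_ac)
  define T where "T = (\<Sum>k. ennreal (a k * exp_taylor k l))"
  \<comment> \<open>T sums a k a j over j \<le> k; adding its mirror image j \<ge> k double counts only the diagonal,
    which is the series of I_0(2 l).\<close>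
  have lower: "T = (\<Sum>k. \<Sum>j. ennreal (if j \<le> k then a k * a j else 0))"
    unfolding T_def
  proof (rule suminf_cong)
    fix k
    have "ennreal (a k * exp_taylor k l) = (\<Sum>j\<le>k. ennreal (a k * a j))"
      unfolding exp_taylor_def a_def[symmetric] sum_distrib_left using a by (simp add: sum_ennreal)
    also have "\<dots> = (\<Sum>j. ennreal (if j \<le> k then a k * a j else 0))"
      by (subst suminf_finite[of "{..k}"]) auto
    finally show "ennreal (a k * exp_taylor k l) = (\<Sum>j. ennreal (if j \<le> k then a k * a j else 0))" .
  qed
  have upper: "T = (\<Sum>k. \<Sum>j. ennreal (if k \<le> j then a k * a j else 0))"
    unfolding lower by (subst suminf_ennreal_swap) (rule suminf_cong, rule suminf_cong, simp add: mult.commute)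
  have full: "(\<Sum>k. \<Sum>j. ennreal (a k * a j)) = ennreal (exp l * exp l)"
  proof -
    have "(\<Sum>k. \<Sum>j. ennreal (a k * a j)) = (\<Sum>k. ennreal (a k) * (\<Sum>j. ennreal (a j)))"
      using a by (simp add: ennreal_mult flip: ennreal_suminf_cmult)
    also have "\<dots> = ennreal (exp l) * ennreal (exp l)"
      by (simp add: sum_a ennreal_suminf_multc)
    finally show ?thesis by (simp add: ennreal_mult)
  qed
  have diagonal: "(\<Sum>k. \<Sum>j. if j = k then ennreal (a k * a j) else 0) = ennreal (bessel_I 0 (2 * l))"
  proof -
    have "(\<lambda>k. a k * a k) sums bessel_I 0 (2 * l)"
      using sums_bessel_I0[of l] by (simp add: a_def power_mult power2_eq_square power_mult_distrib)
    then have "(\<Sum>k. ennreal (a k * a k)) = ennreal (bessel_I 0 (2 * l))"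
      using a by (intro suminf_ennreal_eq) auto
    moreover have "(\<Sum>k. \<Sum>j. if j = k then ennreal (a k * a j) else 0) = (\<Sum>k. ennreal (a k * a k))"
      by (intro suminf_cong, subst suminf_finite[of "{k}" for k]) auto
    ultimately show ?thesis by simp
  qed
  have mirror: "(\<Sum>j. ennreal (if j \<le> k then a k * a j else 0)) + (\<Sum>j. ennreal (if k \<le> j then a k * a j else 0))
      = (\<Sum>j. ennreal (a k * a j)) + (\<Sum>j. if j = k then ennreal (a k * a j) else 0)" for k
  proof -
    have "(\<Sum>j. ennreal (if j \<le> k then a k * a j else 0)) + (\<Sum>j. ennreal (if k \<le> j then a k * a j else 0))
        = (\<Sum>j. ennreal (if j \<le> k then a k * a j else 0) + ennreal (if k \<le> j then a k * a j else 0))"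
      by (rule suminf_add) (auto intro: summableI)
    also have "\<dots> = (\<Sum>j. ennreal (a k * a j) + (if j = k then ennreal (a k * a j) else 0))"
      by (rule suminf_cong) auto
    also have "\<dots> = (\<Sum>j. ennreal (a k * a j)) + (\<Sum>j. if j = k then ennreal (a k * a j) else 0)"
      by (rule suminf_add[symmetric]) (auto intro: summableI)
    finally show ?thesis .
  qed
  have "T + T = (\<Sum>k. (\<Sum>j. ennreal (if j \<le> k then a k * a j else 0))
                   + (\<Sum>j. ennreal (if k \<le> j then a k * a j else 0)))"
    unfolding lower by (subst (2) lower[symmetric], subst upper, subst suminf_add) (auto intro: summableI)
  also have "\<dots> = (\<Sum>k. \<Sum>j. ennreal (a k * a j)) + (\<Sum>k. \<Sum>j. if j = k then ennreal (a k * a j) else 0)"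
    unfolding mirror by (rule suminf_add[symmetric]) (auto intro: summableI)
  also have "\<dots> = ennreal (exp l * exp l + bessel_I 0 (2 * l))"
    unfolding full diagonal using bessel_I0_nonneg[of l] by (subst ennreal_plus) auto
  finally have TT: "T + T = ennreal (exp l * exp l + bessel_I 0 (2 * l))" .
  moreover have "T \<noteq> top" using TT by (metis ennreal_add_eq_top ennreal_neq_top)
  ultimately obtain r where r: "T = ennreal r" "r \<ge> 0" by (cases T rule: ennreal_cases) auto
  have "ennreal (2 * r) = ennreal (exp l * exp l + bessel_I 0 (2 * l))"
    using TT r by (simp add: ennreal_plus[symmetric] del: ennreal_plus)
  then have r2: "2 * r = exp l * exp l + bessel_I 0 (2 * l)"
    using r bessel_I0_nonneg[of l] by (subst (asm) ennreal_inj) (auto intro: add_nonneg_nonneg)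
  show ?thesis
  proof (rule sums_of_suminf_ennreal)
    show "(\<Sum>k. ennreal (l ^ k / fact k * exp_taylor k l)) = ennreal ((exp l * exp l + bessel_I 0 (2 * l)) / 2)"
      using r r2 unfolding T_def a_def by simp
    show "0 \<le> l ^ k / fact k * exp_taylor k l" for k
      using l exp_taylor_nonneg[OF l] by simp
  qed (use bessel_I0_nonneg[of l] in simp)
qed

lemma integral_bessel_I0_sqrt_exp:
  assumes l: "l > 0"
  shows "integral {0..l} (\<lambda>t. bessel_I 0 (2 * sqrt (l * t)) * exp (- t))
       = (exp l - exp (- l) * bessel_I 0 (2 * l)) / 2"
proof -
  define f where "f t = bessel_I 0 (2 * sqrt (l * t)) * exp (- t)" for t
  define c where "c k = l ^ k / (fact k)\<^sup>2" for k :: nat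
  have c: "c k \<ge> 0" for k unfolding c_def using l by simp
  have f_sums: "(\<lambda>k. c k * (t ^ k * exp (- t))) sums f t" if t: "t \<ge> 0" for t
  proof -
    have "(\<lambda>k. sqrt (l * t) ^ (2 * k) / (fact k)\<^sup>2 * exp (- t)) sums f t"
      unfolding f_def by (rule sums_mult2[OF sums_bessel_I0])
    moreover have "sqrt (l * t) ^ (2 * k) = l ^ k * t ^ k" for k
      using l t by (simp add: power_mult power_mult_distrib)
    ultimately show ?thesis by (simp add: c_def mult_ac)
  qed
  have f: "f t \<ge> 0" if "t \<ge> 0" for t
    using sums_le[of "\<lambda>_. 0" _ 0, OF _ sums_zero f_sums[OF that]] c that by auto
  \<comment> \<open>Termwise integration turns the series of f into incomplete gamma integrals.\<close>
  define a where "a k = l ^ k / fact k" for k :: nat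
  define w where "w k = a k - exp (- l) * (a k * exp_taylor k l)" for k
  have taylor: "exp (- l) * exp_taylor k l \<le> 1" for k
  proof -
    have "exp (- l) * exp_taylor k l \<le> exp (- l) * exp l" using exp_taylor_le_exp[of l k] l by simp
    then show ?thesis by (simp add: exp_minus)
  qed
  have w: "w k \<ge> 0" for k
  proof -
    have "exp (- l) * (a k * exp_taylor k l) \<le> a k"
      using taylor[of k] l mult_left_le[of "exp (- l) * exp_taylor k l" "a k"]
      by (simp add: a_def mult_ac)
    then show ?thesis unfolding w_def by simp
  qed
  have w_sums': "w sums (exp l - exp (- l) * ((exp l * exp l + bessel_I 0 (2 * l)) / 2))"
  proof -
    have "a sums exp l"
      unfolding a_def using exp_converges[of l] by (simp add: real_scaleR_def divide_inverse mult_ac)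
    moreover have "(\<lambda>k. a k * exp_taylor k l) sums ((exp l * exp l + bessel_I 0 (2 * l)) / 2)"
      unfolding a_def using sums_power_fact_exp_taylor[of l] l by simp
    ultimately show ?thesis
      unfolding w_def by (intro sums_diff sums_mult)
  qed
  have "exp l - exp (- l) * ((exp l * exp l + bessel_I 0 (2 * l)) / 2)
      = (exp l - exp (- l) * bessel_I 0 (2 * l)) / 2"
    by (simp add: exp_minus field_simps)
  with w_sums' have w_sums: "w sums ((exp l - exp (- l) * bessel_I 0 (2 * l)) / 2)" by (simp only:)
  have "(\<integral>\<^sup>+t. ennreal (indicator {0..l} t * f t) \<partial>lborel)
      = (\<integral>\<^sup>+t. (\<Sum>k. ennreal (c k) * (ennreal (t ^ k * exp (- t)) * indicator {0..l} t)) \<partial>lborel)"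
  proof (rule nn_integral_cong)
    fix t :: real
    show "ennreal (indicator {0..l} t * f t)
        = (\<Sum>k. ennreal (c k) * (ennreal (t ^ k * exp (- t)) * indicator {0..l} t))"
    proof (cases "t \<in> {0..l}")
      case True
      then have t: "t \<ge> 0" by simp
      have "ennreal (f t) = (\<Sum>k. ennreal (c k * (t ^ k * exp (- t))))"
        using f_sums[OF t] c t by (intro suminf_ennreal_eq[symmetric]) auto
      also have "\<dots> = (\<Sum>k. ennreal (c k) * ennreal (t ^ k * exp (- t)))"
        using c t by (intro suminf_cong) (simp add: ennreal_mult)
      finally show ?thesis using True by simp
    qed simp
  qed
  also have "\<dots> = (\<Sum>k. \<integral>\<^sup>+t. ennreal (c k) * (ennreal (t ^ k * exp (- t)) * indicator {0..l} t) \<partial>lborel)"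
    by (rule nn_integral_suminf) measurable
  also have "\<dots> = (\<Sum>k. ennreal (w k))"
  proof (rule suminf_cong)
    fix k
    have "(\<integral>\<^sup>+t. ennreal (c k) * (ennreal (t ^ k * exp (- t)) * indicator {0..l} t) \<partial>lborel)
        = ennreal (c k) * ennreal (fact k * (1 - exp (- l) * exp_taylor k l))"
      using l by (subst nn_integral_cmult) (auto simp: nn_integral_power_exp_Icc)
    also have "\<dots> = ennreal (c k * (fact k * (1 - exp (- l) * exp_taylor k l)))"
      using c taylor[of k] by (subst ennreal_mult) auto
    also have "c k * (fact k * (1 - exp (- l) * exp_taylor k l)) = w k"
      unfolding c_def w_def a_def by (simp add: power2_eq_square field_simps)
    finally show "(\<integral>\<^sup>+t. ennreal (c k) * (ennreal (t ^ k * exp (- t)) * indicator {0..l} t) \<partial>lborel)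
        = ennreal (w k)" .
  qed
  also have "\<dots> = ennreal ((exp l - exp (- l) * bessel_I 0 (2 * l)) / 2)"
    using w w_sums by (rule suminf_ennreal_eq)
  finally have nn: "(\<integral>\<^sup>+t. ennreal (indicator {0..l} t * f t) \<partial>lborel)
      = ennreal ((exp l - exp (- l) * bessel_I 0 (2 * l)) / 2)" .
  have "(exp l - exp (- l) * bessel_I 0 (2 * l)) / 2 \<ge> 0"
    using w_sums w by (metis sums_le sums_zero)
  then have "((\<lambda>t. indicator {0..l} t * f t) has_integral
      ((exp l - exp (- l) * bessel_I 0 (2 * l)) / 2)) UNIV"
    by (intro nn_integral_has_integral) (use nn f in \<open>auto simp: f_def indicator_def\<close>)
  moreover have "(\<lambda>t. indicator {0..l} t * f t) = (\<lambda>t. if t \<in> {0..l} then f t else 0)"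
    by (auto simp: indicator_def)
  ultimately have "((\<lambda>t. if t \<in> {0..l} then f t else 0) has_integral
      ((exp l - exp (- l) * bessel_I 0 (2 * l)) / 2)) UNIV"
    by (simp only:)
  then show ?thesis
    unfolding has_integral_restrict_UNIV f_def by (rule integral_unique)
qed

theorem mainTheorem8:
  fixes l :: real and n :: nat
  assumes "l > 0" and "n \<ge> 2"
  defines "EG \<equiv> measure_pmf.expectation (Pi_pmf {..<n} 0 (\<lambda>_. ztp_pmf l)) (gini_hat n)"
  defines "J \<equiv> integral {0..1} (\<lambda>y. (bessel_I 0 (2 * l * y) + bessel_I 1 (2 * l * y))
                                    * (exp (l * y) - 1) ^ (n - 2))"
  shows "(EG = n * l * exp (- (real n * l)) / (1 - exp (- l)) ^ n * J
              - n * exp (- l) / ((n - 1) * (1 - exp (- l))))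
         \<and> (EG - gini (ztp_pmf l) =
           n * l * exp (- (real n * l)) / (1 - exp (- l)) ^ n * J
           - n * exp (- l) / ((n - 1) * (1 - exp (- l)))
           + 2 * exp (- l) / (1 - exp (- l)) *
               integral {0..l} (\<lambda>t. bessel_I 0 (2 * sqrt (l * t)) * exp (- t))
           - exp (- 2 * l) / (1 - exp (- l)) * bessel_I 1 (2 * l) - 1)"
proof -
  note l = assms(1) and n = assms(2)
  define x where "x = exp l"
  define d where "d = x - 1"
  have x: "x > 0" and d: "d > 0" unfolding d_def x_def using l by simp_all
  have exps: "exp (- l) = 1 / x" "exp (- 2 * l) = 1 / x ^ 2" "exp (- (real n * l)) = 1 / x ^ n"
    "1 - 1 / x = d / x"
    unfolding d_def x_def using x
    by (simp_all add: exp_minus exp_of_nat_mult exp_of_nat2_mult power2_eq_square field_simps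
             flip: exp_add)
  have "real (n - 1) = real n - 1" using n by simp
  then have EG: "EG = n * l * exp (- (real n * l)) / (1 - exp (- l)) ^ n * J
                     - n * exp (- l) / ((n - 1) * (1 - exp (- l)))"
    unfolding EG_def J_def expectation_gini_hat_ztp[OF l n] exps x_def[symmetric] d_def[symmetric]
    using x by (simp add: power_divide)
  have "2 * (1 / x) / (d / x) * ((x - 1 / x * I0) / 2) - 1 / x ^ 2 / (d / x) * I1 - 1
      = (x * x - x * d - I0 - I1) / (x * d)" for I0 I1
    using x d by (simp add: field_simps power2_eq_square)
  moreover have "x * x - x * d = x" unfolding d_def by (simp add: algebra_simps)
  ultimately have "2 * (1 / x) / (d / x) * ((x - 1 / x * I0) / 2) - 1 / x ^ 2 / (d / x) * I1 - 1
      = - ((I0 + I1 - x) / (x * d))" for I0 I1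
    by (simp add: minus_divide_left)
  then have "2 * exp (- l) / (1 - exp (- l)) *
               integral {0..l} (\<lambda>t. bessel_I 0 (2 * sqrt (l * t)) * exp (- t))
             - exp (- 2 * l) / (1 - exp (- l)) * bessel_I 1 (2 * l) - 1 = - gini (ztp_pmf l)"
    unfolding integral_bessel_I0_sqrt_exp[OF l] gini_ztp[OF l] exps x_def[symmetric] d_def[symmetric] .
  with EG show ?thesis by simp
qed

end
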